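(* Let $G$ be a group satisfying the property $\mathsf{FM}$ and $\nu$ a conjugation-invariant pseudo-norm on $G$. For any elements $g_1,\dots,g_k\in G$ and real numbers $\lambda,s_1,\dots,s_k$, \[ \lim_{n\to\infty}\frac1n\,\nu\big(g_1^{[\lambda s_1n]}\cdots g_k^{[\lambda s_kn]}\big)=|\lambda|\lim_{n\to\infty}\frac1n\,\nu\big(g_1^{[s_1n]}\cdots g_k^{[s_kn]}\big), \] where $[\cdot]$ denotes the integer part.
   Context: A conjugation-invariant pseudo-norm on a group $G$ is a function $\nu\colon G\to\mathbb{R}_{\ge0}$ with $\nu(1)=0$, $\nu(f)=\nu(f^{-1})$, $\nu(fg)\le\nu(f)+\nu(g)$ and $\nu(gfg^{-1})=\nu(f)$ for all $f,g\in G$. Property $\mathsf{FM}$: for a subgroup $H\le G$, let $\nu_H(f)$ be the minimal $k$ such that $f=g_1h_1g_1^{-1}\cdots g_kh_kg_k^{-1}$ ($g_i\in G,h_i\in H$), $\infty$ if none; for $K\subset G$ let $\mathrm{D}^f_H(K)$ be the set of $h_0\in G$ such that for all $g_1,\dots,g_k\in G$ there is $h\in G$ with every element of $hh_0h^{-1}K(hh_0h^{-1})^{-1}$ commuting with every element of $\bigcup_i g_iHg_i^{-1}$. $(G,H)$ satisfies $\mathsf{FM}$ if $\nu_H<\infty$ on $G$ and $\mathrm{D}^f_H(h_1Hh_1^{-1}\cup\dots\cup h_kHh_k^{-1})\ne\emptyset$ for all $h_1,\dots,h_k\in G$; $G$ satisfies $\mathsf{FM}$ if some $(G,H)$ does.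 *)

theory Defs
  imports "HOL-Algebra.Algebra" "HOL-Library.Extended_Nat" Complex_Main
begin

definition gprod :: "('a, 'b) monoid_scheme \<Rightarrow> 'a list \<Rightarrow> 'a" where
  "gprod G xs = foldr (\<lambda>x acc. x \<otimes>\<^bsub>G\<^esub> acc) xs \<one>\<^bsub>G\<^esub>"

definition conj_inv_pseudo_norm :: "('a, 'b) monoid_scheme \<Rightarrow> ('a \<Rightarrow> real) \<Rightarrow> bool" where
  "conj_inv_pseudo_norm G \<nu> \<longleftrightarrow>
     \<nu> \<one>\<^bsub>G\<^esub> = 0 \<and>
     (\<forall>f\<in>carrier G. \<nu> f \<ge> 0) \<and>
     (\<forall>f\<in>carrier G. \<nu> (inv\<^bsub>G\<^esub> f) = \<nu> f) \<and>
     (\<forall>f\<in>carrier G. \<forall>g\<in>carrier G. \<nu> (f \<otimes>\<^bsub>G\<^esub> g) \<le> \<nu> f + \<nu> g) \<and>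
     (\<forall>f\<in>carrier G. \<forall>g\<in>carrier G. \<nu> (g \<otimes>\<^bsub>G\<^esub> f \<otimes>\<^bsub>G\<^esub> inv\<^bsub>G\<^esub> g) = \<nu> f)"

definition conj_prod_of :: "('a, 'b) monoid_scheme \<Rightarrow> 'a set \<Rightarrow> 'a \<Rightarrow> nat \<Rightarrow> bool" where
  "conj_prod_of G H f k \<longleftrightarrow>
     (\<exists>xs. length xs = k \<and> set xs \<subseteq> carrier G \<times> H \<and>
        f = gprod G (map (\<lambda>(g, h). g \<otimes>\<^bsub>G\<^esub> h \<otimes>\<^bsub>G\<^esub> inv\<^bsub>G\<^esub> g) xs))"

definition nuH :: "('a, 'b) monoid_scheme \<Rightarrow> 'a set \<Rightarrow> 'a \<Rightarrow> enat" where
  "nuH G H f = (if \<exists>k. conj_prod_of G H f k then enat (LEAST k. conj_prod_of G H f k) else \<infinity>)"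

definition conjset :: "('a, 'b) monoid_scheme \<Rightarrow> 'a \<Rightarrow> 'a set \<Rightarrow> 'a set" where
  "conjset G g K = (\<lambda>k. g \<otimes>\<^bsub>G\<^esub> k \<otimes>\<^bsub>G\<^esub> inv\<^bsub>G\<^esub> g) ` K"

definition Df :: "('a, 'b) monoid_scheme \<Rightarrow> 'a set \<Rightarrow> 'a set \<Rightarrow> 'a set" where
  "Df G H K = {h0 \<in> carrier G. \<forall>gs. set gs \<subseteq> carrier G \<longrightarrow>
     (\<exists>h\<in>carrier G.
        \<forall>x\<in>conjset G (h \<otimes>\<^bsub>G\<^esub> h0 \<otimes>\<^bsub>G\<^esub> inv\<^bsub>G\<^esub> h) K.
        \<forall>y\<in>(\<Union>g\<in>set gs. conjset G g H). x \<otimes>\<^bsub>G\<^esub> y = y \<otimes>\<^bsub>G\<^esub> x)}"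

definition FM_pair :: "('a, 'b) monoid_scheme \<Rightarrow> 'a set \<Rightarrow> bool" where
  "FM_pair G H \<longleftrightarrow> subgroup H G \<and>
     (\<forall>f\<in>carrier G. nuH G H f < \<infinity>) \<and>
     (\<forall>hs. set hs \<subseteq> carrier G \<longrightarrow> Df G H (\<Union>h\<in>set hs. conjset G h H) \<noteq> {})"

definition FM :: "('a, 'b) monoid_scheme \<Rightarrow> bool" where
  "FM G \<longleftrightarrow> (\<exists>H. FM_pair G H)"

end

theory Submission
  imports Defs
begin

(*
  Fix g_1, ..., g_k and put N(a) = nu(g_1^a_1 ... g_k^a_k) for a in Z^k.  Property FM yields one
  element p such that every p g_i p^-1 commutes with every g_j.  Then the product
  (prod g_i^a_i) * p (prod g_i^b_i) p^-1 can be reordered into prod (g_i^a_i * p g_i^b_i p^-1),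
  and removing each of these k + 1 conjugations by p changes nu by at most 2 nu(p).  So N is a
  quasi-norm: N(a + b) <= N(a) + N(b) + C and N(-a) <= N(a) + C.

  Consequently F_t(n) = N(floor(t s_1 n), ..., floor(t s_k n)) is subadditive in n up to a
  constant, and by Fekete's lemma F_t(n)/n converges to a limit l(t).  This limit is Lipschitz
  and even in t, and l(p/q) = (p/q) l(1) since F_(p/q)(q n) = F_1(p n); hence l(t) = |t| l(1).
*)

section \<open>Asymptotics of quasi-subadditive sequences\<close>

lemma subadditive_le_mult_add:
  fixes f :: "nat \<Rightarrow> real"
  assumes sub: "\<And>m n. f (m + n) \<le> f m + f n"
  shows "f (q * m + r) \<le> real q * f m + f r"
proof (induction q)
  case (Suc q)
  have "f (Suc q * m + r) = f (m + (q * m + r))" by (simp add: add.assoc)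
  also have "\<dots> \<le> f m + f (q * m + r)" by (rule sub)
  finally show ?case using Suc by (simp add: algebra_simps)
qed simp

lemma subadditive_quotient_le:
  fixes f :: "nat \<Rightarrow> real"
  assumes sub: "\<And>m n. f (m + n) \<le> f m + f n" and nonneg: "\<And>n. 0 \<le> f n"
    and "m \<ge> 1" "n \<ge> 1"
  shows "f n / real n \<le> f m / real m + (\<Sum>r<m. f r) / real n"
proof -
  have "real (n div m) * real m \<le> real n"
    by (metis of_nat_le_iff of_nat_mult div_times_less_eq_dividend)
  then have "real (n div m) \<le> real n / real m" using \<open>m \<ge> 1\<close> by (simp add: field_simps)
  have "f n \<le> real (n div m) * f m + f (n mod m)"
    using subadditive_le_mult_add[of f "n div m" m "n mod m", OF sub] by simp
  also have "\<dots> \<le> real n / real m * f m + (\<Sum>r<m. f r)"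
    using \<open>real (n div m) \<le> real n / real m\<close> \<open>m \<ge> 1\<close> nonneg
    by (intro add_mono mult_right_mono member_le_sum) auto
  finally show ?thesis using \<open>n \<ge> 1\<close> by (simp add: field_simps)
qed

lemma fekete_convergent:
  fixes f :: "nat \<Rightarrow> real"
  assumes sub: "\<And>m n. f (m + n) \<le> f m + f n" and nonneg: "\<And>n. 0 \<le> f n"
  shows "convergent (\<lambda>n. f n / real n)"
proof -
  define l where "l = (INF n\<in>{1..}. f n / real n)"
  have bdd: "bdd_below ((\<lambda>n. f n / real n) ` {1..})"
    using nonneg by (intro bdd_belowI[of _ 0]) auto
  have l_le: "l \<le> f n / real n" if "n \<ge> 1" for n
    unfolding l_def using that bdd by (intro cINF_lower) auto
  have "\<exists>N. \<forall>n\<ge>N. dist (f n / real n) l < e" if e: "e > 0" for e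
  proof -
    have "l < l + e / 2" using e by simp
    then obtain m where m: "m \<ge> 1" and fm: "f m / real m < l + e / 2"
      unfolding l_def by (subst (asm) cINF_less_iff[OF _ bdd]) auto
    define B where "B = (\<Sum>r<m. f r)"
    obtain N :: nat where N: "real N > 2 * B / e" using reals_Archimedean2 by blast
    have "dist (f n / real n) l < e" if n: "n \<ge> Suc N" for n
    proof -
      have "2 * B < e * real N" using N e by (simp add: field_simps)
      also have "\<dots> \<le> e * real n" using n e by (intro mult_left_mono) auto
      finally have "B / real n < e / 2" using n by (simp add: field_simps)
      moreover have "f n / real n \<le> f m / real m + B / real n"
        unfolding B_def using subadditive_quotient_le[OF sub nonneg m, of n] n by simp
      ultimately have "f n / real n < l + e" using fm by linarith
      then show ?thesis using l_le[of n] n by (simp add: dist_real_def)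
    qed
    then show ?thesis by blast
  qed
  then have "(\<lambda>n. f n / real n) \<longlonglongrightarrow> l" by (simp add: lim_sequentially)
  then show ?thesis by (rule convergentI)
qed

lemma quasi_subadditive_convergent:
  fixes f :: "nat \<Rightarrow> real"
  assumes sub: "\<And>m n. f (m + n) \<le> f m + f n + C" and nonneg: "\<And>n. 0 \<le> f n" and "C \<ge> 0"
  shows "convergent (\<lambda>n. f n / real n)"
proof -
  have "convergent (\<lambda>n. (f n + C) / real n)"
    using assms by (intro fekete_convergent) (auto simp: algebra_simps)
  then have "convergent (\<lambda>n. (f n + C) / real n - C / real n)"
    by (intro convergent_diff convergentI[OF lim_const_over_n])
  then show ?thesis by (simp add: add_divide_distrib)
qed

lemma lipschitz_even_rat_homogeneous_eq_abs:
  fixes L :: "real \<Rightarrow> real"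
  assumes lip: "\<And>t u. \<bar>L t - L u\<bar> \<le> K * \<bar>t - u\<bar>"
    and even: "\<And>t. L (- t) = L t"
    and rat: "\<And>p q. 0 < p \<Longrightarrow> 0 < q \<Longrightarrow> L (real p / real q) = real p / real q * L 1"
  shows "L t = \<bar>t\<bar> * L 1"
proof -
  have pos: "L t = t * L 1" if "t \<ge> 0" for t
  proof -
    define M where "M = \<bar>K\<bar> + \<bar>L 1\<bar> + 1"
    have M: "M > 0" unfolding M_def by (simp add: add_nonneg_pos)
    have "\<bar>L t - t * L 1\<bar> \<le> 0 + e" if e: "e > 0" for e
    proof -
      obtain r where r: "r \<in> \<rat>" "t < r" "r < t + e / M"
        using Rats_dense_in_real[of t "t + e / M"] e M by auto
      then obtain p q :: nat where "q \<noteq> 0" and pq: "r = real p / real q"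
        using \<open>t \<ge> 0\<close> by (elim Rats_abs_nat_div_natE) auto
      moreover have "p \<noteq> 0" using pq r(2) \<open>t \<ge> 0\<close> by (cases "p = 0") auto
      ultimately have "L r = r * L 1" using pq by (simp add: rat)
      then have "L t - t * L 1 = (L t - L r) + (r - t) * L 1" by (simp add: algebra_simps)
      then have "\<bar>L t - t * L 1\<bar> \<le> \<bar>L t - L r\<bar> + \<bar>r - t\<bar> * \<bar>L 1\<bar>"
        by (metis abs_mult abs_triangle_ineq)
      also have "\<dots> \<le> M * (r - t)"
      proof -
        have "\<bar>L t - L r\<bar> \<le> K * (r - t)" using lip[of t r] r(2) by simp
        also have "\<dots> \<le> \<bar>K\<bar> * (r - t)" using r(2) by (intro mult_right_mono) auto
        finally show ?thesis using r(2) unfolding M_def by (simp add: algebra_simps)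
      qed
      also have "\<dots> \<le> e" using r(3) M by (simp add: field_simps)
      finally show ?thesis by simp
    qed
    then show ?thesis using field_le_epsilon by fastforce
  qed
  show ?thesis
    using pos[of "\<bar>t\<bar>"] even[of t] by (cases "t \<ge> 0") auto
qed

lemma growth_rate_abs_homogeneous:
  fixes F :: "real \<Rightarrow> nat \<Rightarrow> real"
  assumes sub: "\<And>t m n. F t (m + n) \<le> F t m + F t n + D"
    and lip: "\<And>t u n. F t n \<le> F u n + K * \<bar>t - u\<bar> * real n + D"
    and neg: "\<And>t n. F (- t) n \<le> F t n + D"
    and nonneg: "\<And>t n. 0 \<le> F t n"
    and rescale: "\<And>p q n. 0 < q \<Longrightarrow> F (real p / real q) (q * n) = F 1 (p * n)"
    and "D \<ge> 0"
  shows "\<exists>L. \<forall>t. (\<lambda>n. F t n / real n) \<longlonglongrightarrow> \<bar>t\<bar> * L"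
proof -
  define L where "L t = lim (\<lambda>n. F t n / real n)" for t
  have conv: "(\<lambda>n. F t n / real n) \<longlonglongrightarrow> L t" for t
    unfolding L_def using quasi_subadditive_convergent[of "F t" D] sub nonneg \<open>D \<ge> 0\<close>
    by (simp add: convergent_LIMSEQ_iff)
  have rate_le: "L t \<le> L u + c" if le: "\<And>n. F t n \<le> F u n + c * real n + D" for t u c
  proof (rule LIMSEQ_le[OF conv])
    show "(\<lambda>n. F u n / real n + c + D / real n) \<longlonglongrightarrow> L u + c"
      using tendsto_add[OF tendsto_add[OF conv tendsto_const] lim_const_over_n[of D]] by simp
    have "F t n / real n \<le> F u n / real n + c + D / real n" if "n \<ge> 1" for n
      using le[of n] that by (simp add: field_simps)
    then show "\<exists>N. \<forall>n\<ge>N. F t n / real n \<le> F u n / real n + c + D / real n" by blast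
  qed
  have "\<bar>L t - L u\<bar> \<le> K * \<bar>t - u\<bar>" for t u
    using rate_le[of t u, OF lip] rate_le[of u t, OF lip] by (simp add: abs_minus_commute)
  moreover have "L (- t) = L t" for t
    using rate_le[of "- t" t 0] rate_le[of t "- t" 0] neg[of t] neg[of "- t"] by fastforce
  moreover have "L (real p / real q) = real p / real q * L 1" if "0 < p" "0 < q" for p q
  proof -
    have mono: "strict_mono (\<lambda>n. q * n)" "strict_mono (\<lambda>n. p * n)"
      using that by (auto simp: strict_mono_def)
    have "(\<lambda>n. F (real p / real q) (q * n) / real (q * n)) \<longlonglongrightarrow> L (real p / real q)"
      using LIMSEQ_subseq_LIMSEQ[OF conv mono(1)] by (simp add: o_def)
    moreover have "(\<lambda>n. F (real p / real q) (q * n) / real (q * n)) \<longlonglongrightarrow> L 1 * (real p / real q)"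
    proof -
      have "(\<lambda>n. F (real p / real q) (q * n) / real (q * n))
          = (\<lambda>n. F 1 (p * n) / real (p * n) * (real p / real q))"
        using that rescale[of q p] by (intro ext) (auto simp: field_simps)
      then show ?thesis
        using tendsto_mult_right[OF LIMSEQ_subseq_LIMSEQ[OF conv mono(2)]] by (simp only: o_def)
    qed
    ultimately show ?thesis using LIMSEQ_unique by (simp add: mult.commute)
  qed
  ultimately have "L t = \<bar>t\<bar> * L 1" for t by (rule lipschitz_even_rat_homogeneous_eq_abs)
  then show ?thesis using conv by metis
qed

lemma floor_add_diff_le: "\<bar>\<lfloor>x + y\<rfloor> - (\<lfloor>x\<rfloor> + \<lfloor>y\<rfloor>)\<bar> \<le> (1::int)"
  for x y :: real
  using floor_add[of x y] by (simp split: if_splits)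

lemma floor_minus_add_le: "\<bar>\<lfloor>- x\<rfloor> + \<lfloor>x\<rfloor>\<bar> \<le> (1::int)"
  for x :: real
  using floor_add_diff_le[of "- x" x] by simp

lemma floor_diff_le: "real_of_int \<bar>\<lfloor>x\<rfloor> - \<lfloor>y\<rfloor>\<bar> \<le> \<bar>x - y\<bar> + 1"
  for x y :: real
  using floor_le_iff[of x] floor_le_iff[of y] by linarith

lemma sum_floor_diff_le:
  "(\<Sum>s\<leftarrow>ss. real_of_int \<bar>\<lfloor>t * s * x\<rfloor> - \<lfloor>u * s * x\<rfloor>\<bar>)
     \<le> \<bar>t - u\<bar> * \<bar>x\<bar> * (\<Sum>s\<leftarrow>ss. \<bar>s\<bar>) + real (length ss)"
proof -
  have "(\<Sum>s\<leftarrow>ss. real_of_int \<bar>\<lfloor>t * s * x\<rfloor> - \<lfloor>u * s * x\<rfloor>\<bar>) \<le> (\<Sum>s\<leftarrow>ss. \<bar>t - u\<bar> * \<bar>x\<bar> * \<bar>s\<bar> + 1)"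
  proof (rule sum_list_mono)
    fix s
    have "\<bar>t * s * x - u * s * x\<bar> = \<bar>t - u\<bar> * \<bar>x\<bar> * \<bar>s\<bar>"
      by (simp add: abs_mult flip: left_diff_distrib)
    then show "real_of_int \<bar>\<lfloor>t * s * x\<rfloor> - \<lfloor>u * s * x\<rfloor>\<bar> \<le> \<bar>t - u\<bar> * \<bar>x\<bar> * \<bar>s\<bar> + 1"
      using floor_diff_le[of "t * s * x" "u * s * x"] by simp
  qed
  then show ?thesis by (simp add: sum_list_addf sum_list_const_mult sum_list_triv)
qed

lemma sum_list_le_length_mult:
  fixes f :: "'a \<Rightarrow> real"
  assumes "\<And>x. x \<in> set xs \<Longrightarrow> f x \<le> c"
  shows "(\<Sum>x\<leftarrow>xs. f x) \<le> real (length xs) * c"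
  using sum_list_mono[of xs f "\<lambda>_. c", OF assms] by (simp add: sum_list_triv)

lemma quasi_norm_growth_abs_homogeneous:
  fixes N :: "int list \<Rightarrow> real" and ss :: "real list"
  assumes add: "\<And>ks ls. length ks = length ss \<Longrightarrow> length ls = length ss \<Longrightarrow>
                  N (map2 (+) ks ls) \<le> N ks + N ls + C"
    and neg: "\<And>ks. length ks = length ss \<Longrightarrow> N (map uminus ks) \<le> N ks + C"
    and bound: "\<And>ks. N ks \<le> K * (\<Sum>k\<leftarrow>ks. of_int \<bar>k\<bar>)"
    and nonneg: "\<And>ks. 0 \<le> N ks"
    and "C \<ge> 0" and "K \<ge> 0"
  shows "\<exists>L. \<forall>t. (\<lambda>n. N (map (\<lambda>s. \<lfloor>t * s * real n\<rfloor>) ss) / real n) \<longlonglongrightarrow> \<bar>t\<bar> * L"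
proof -
  define d where "d = real (length ss)"
  have add': "N (map (\<lambda>s. a s + b s) ss) \<le> N (map a ss) + N (map b ss) + C" for a b
    using add[of "map a ss" "map b ss"] by (simp add: map2_map_map)
  have N_le: "N (map a ss) \<le> N (map b ss) + K * (\<Sum>s\<leftarrow>ss. of_int \<bar>a s - b s\<bar>) + C" for a b
    using add'[of b "\<lambda>s. a s - b s"] bound[of "map (\<lambda>s. a s - b s) ss"] by (simp add: o_def)
  have N_le_close: "N (map a ss) \<le> N (map b ss) + K * d + C"
    if "\<And>s. \<bar>a s - b s\<bar> \<le> 1" for a b
  proof -
    have "(\<Sum>s\<leftarrow>ss. real_of_int \<bar>a s - b s\<bar>) \<le> d * 1"
      unfolding d_def using that by (intro sum_list_le_length_mult) (metis of_int_1 of_int_le_iff)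
    then have "K * (\<Sum>s\<leftarrow>ss. real_of_int \<bar>a s - b s\<bar>) \<le> K * d"
      using mult_left_mono[OF _ \<open>K \<ge> 0\<close>] by fastforce
    then show ?thesis using N_le[of a b] by linarith
  qed
  define F where "F t n = N (map (\<lambda>s. \<lfloor>t * s * real n\<rfloor>) ss)" for t n
  define S where "S = (\<Sum>s\<leftarrow>ss. \<bar>s\<bar>)"
  have sub: "F t (m + n) \<le> F t m + F t n + (2 * C + K * d)" for t m n
    using N_le_close[of "\<lambda>s. \<lfloor>t * s * real (m + n)\<rfloor>" "\<lambda>s. \<lfloor>t * s * real m\<rfloor> + \<lfloor>t * s * real n\<rfloor>"]
      add'[of "\<lambda>s. \<lfloor>t * s * real m\<rfloor>" "\<lambda>s. \<lfloor>t * s * real n\<rfloor>"] floor_add_diff_le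
    unfolding F_def by (simp add: distrib_left)
  have lip: "F t n \<le> F u n + (K * S) * \<bar>t - u\<bar> * real n + (2 * C + K * d)" for t u n
  proof -
    have "K * (\<Sum>s\<leftarrow>ss. real_of_int \<bar>\<lfloor>t * s * real n\<rfloor> - \<lfloor>u * s * real n\<rfloor>\<bar>)
        \<le> K * (\<bar>t - u\<bar> * real n * S + d)"
      using sum_floor_diff_le[where x = "real n"] \<open>K \<ge> 0\<close>
      unfolding S_def d_def by (intro mult_left_mono) auto
    also have "\<dots> = (K * S) * \<bar>t - u\<bar> * real n + K * d" by (simp add: algebra_simps)
    finally show ?thesis
      using N_le[of "\<lambda>s. \<lfloor>t * s * real n\<rfloor>" "\<lambda>s. \<lfloor>u * s * real n\<rfloor>"] \<open>C \<ge> 0\<close>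
      unfolding F_def by linarith
  qed
  have neg: "F (- t) n \<le> F t n + (2 * C + K * d)" for t n
    using N_le_close[of "\<lambda>s. \<lfloor>- t * s * real n\<rfloor>" "\<lambda>s. - \<lfloor>t * s * real n\<rfloor>"]
      neg[of "map (\<lambda>s. \<lfloor>t * s * real n\<rfloor>) ss"] floor_minus_add_le
    unfolding F_def by (simp add: o_def)
  have rescale: "F (real p / real q) (q * n) = F 1 (p * n)" if "0 < q" for p q n
    unfolding F_def using that by (simp add: field_simps)
  have "0 \<le> 2 * C + K * d" using \<open>C \<ge> 0\<close> \<open>K \<ge> 0\<close> unfolding d_def by simp
  then have "\<exists>L. \<forall>t. (\<lambda>n. F t n / real n) \<longlonglongrightarrow> \<bar>t\<bar> * L"
    by (intro growth_rate_abs_homogeneous[OF sub lip neg _ rescale]) (simp_all add: F_def nonneg)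
  then show ?thesis unfolding F_def .
qed

section \<open>Products in groups\<close>

lemma gprod_Nil [simp]: "gprod G [] = \<one>\<^bsub>G\<^esub>"
  by (simp add: gprod_def)

lemma gprod_Cons [simp]: "gprod G (x # xs) = x \<otimes>\<^bsub>G\<^esub> gprod G xs"
  by (simp add: gprod_def)

lemma set_map2_subset:
  "(\<And>x y. x \<in> set xs \<Longrightarrow> y \<in> set ys \<Longrightarrow> f x y \<in> S) \<Longrightarrow> set (map2 f xs ys) \<subseteq> S"
  by (auto dest: set_zip_leftD set_zip_rightD)

context group
begin

lemma inv_mult_cancel_left [simp]: "x \<in> carrier G \<Longrightarrow> y \<in> carrier G \<Longrightarrow> inv x \<otimes> (x \<otimes> y) = y"
  by (simp flip: m_assoc)

lemma mult_inv_cancel_left [simp]: "x \<in> carrier G \<Longrightarrow> y \<in> carrier G \<Longrightarrow> x \<otimes> (inv x \<otimes> y) = y"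
  by (simp flip: m_assoc)

lemma gprod_closed [simp]: "set xs \<subseteq> carrier G \<Longrightarrow> gprod G xs \<in> carrier G"
  by (induction xs) auto

lemma commute_gprod:
  assumes "x \<in> carrier G" "set ys \<subseteq> carrier G" "\<And>y. y \<in> set ys \<Longrightarrow> x \<otimes> y = y \<otimes> x"
  shows "x \<otimes> gprod G ys = gprod G ys \<otimes> x"
  using assms(2,3)
proof (induction ys)
  case (Cons y ys)
  have y: "y \<in> carrier G" and ys: "set ys \<subseteq> carrier G" using Cons.prems(1) by auto
  have xy: "x \<otimes> y = y \<otimes> x" using Cons.prems(2) by simp
  have IH: "x \<otimes> gprod G ys = gprod G ys \<otimes> x" using Cons.IH ys Cons.prems(2) by simp
  have "x \<otimes> (y \<otimes> gprod G ys) = (x \<otimes> y) \<otimes> gprod G ys" using assms(1) y ys by (simp add: m_assoc)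
  also have "\<dots> = y \<otimes> (x \<otimes> gprod G ys)" unfolding xy using assms(1) y ys by (simp add: m_assoc)
  also have "\<dots> = (y \<otimes> gprod G ys) \<otimes> x" unfolding IH using assms(1) y ys by (simp add: m_assoc)
  finally show ?case by simp
qed (simp add: assms(1))

lemma gprod_commute:
  assumes "set xs \<subseteq> carrier G" "set ys \<subseteq> carrier G"
    and "\<And>x y. x \<in> set xs \<Longrightarrow> y \<in> set ys \<Longrightarrow> x \<otimes> y = y \<otimes> x"
  shows "gprod G xs \<otimes> gprod G ys = gprod G ys \<otimes> gprod G xs"
  using assms(1,3)
proof (induction xs)
  case (Cons x xs)
  have x: "x \<in> carrier G" and xs: "set xs \<subseteq> carrier G" using Cons.prems(1) by auto
  have IH: "gprod G xs \<otimes> gprod G ys = gprod G ys \<otimes> gprod G xs"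
    by (rule Cons.IH[OF xs]) (meson Cons.prems(2) list.set_intros(2))
  have xP: "x \<otimes> gprod G ys = gprod G ys \<otimes> x"
    using x assms(2) Cons.prems(2) by (intro commute_gprod) simp_all
  have "(x \<otimes> gprod G xs) \<otimes> gprod G ys = x \<otimes> (gprod G ys \<otimes> gprod G xs)"
    unfolding IH[symmetric] using x xs assms(2) by (simp add: m_assoc)
  also have "\<dots> = gprod G ys \<otimes> (x \<otimes> gprod G xs)"
    using x xs assms(2) by (simp add: xP flip: m_assoc)
  finally show ?case by simp
qed (simp add: assms(2))

lemma gprod_map2_mult:
  assumes "length xs = length zs" "set xs \<subseteq> carrier G" "set zs \<subseteq> carrier G"
    and "\<And>x z. x \<in> set xs \<Longrightarrow> z \<in> set zs \<Longrightarrow> z \<otimes> x = x \<otimes> z"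
  shows "gprod G xs \<otimes> gprod G zs = gprod G (map2 (\<otimes>) xs zs)"
  using assms
proof (induction xs zs rule: list_induct2)
  case (Cons x xs z zs)
  have x: "x \<in> carrier G" and z: "z \<in> carrier G"
    and xs: "set xs \<subseteq> carrier G" and zs: "set zs \<subseteq> carrier G" using Cons.prems(1,2) by auto
  have IH: "gprod G xs \<otimes> gprod G zs = gprod G (map2 (\<otimes>) xs zs)"
    using Cons.IH xs zs Cons.prems(3) by simp
  have zP: "z \<otimes> gprod G xs = gprod G xs \<otimes> z"
    using z xs Cons.prems(3) by (intro commute_gprod) simp_all
  have "(x \<otimes> gprod G xs) \<otimes> (z \<otimes> gprod G zs) = x \<otimes> ((gprod G xs \<otimes> z) \<otimes> gprod G zs)"
    using x z xs zs by (simp add: m_assoc)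
  also have "\<dots> = (x \<otimes> z) \<otimes> (gprod G xs \<otimes> gprod G zs)"
    unfolding zP[symmetric] using x z xs zs by (simp add: m_assoc)
  finally show ?case by (simp add: IH)
qed simp

lemma conj_gprod:
  assumes "p \<in> carrier G" "set xs \<subseteq> carrier G"
  shows "p \<otimes> gprod G xs \<otimes> inv p = gprod G (map (\<lambda>x. p \<otimes> x \<otimes> inv p) xs)"
  using assms(2)
proof (induction xs)
  case (Cons x xs)
  have "p \<otimes> (x \<otimes> gprod G xs) \<otimes> inv p = (p \<otimes> x \<otimes> inv p) \<otimes> (p \<otimes> gprod G xs \<otimes> inv p)"
    using Cons.prems assms(1) by (simp add: m_assoc)
  then show ?case using Cons by simp
qed (simp add: assms)

lemma conj_int_pow:
  assumes "p \<in> carrier G" "x \<in> carrier G"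
  shows "p \<otimes> x [^] (i::int) \<otimes> inv p = (p \<otimes> x \<otimes> inv p) [^] i"
proof -
  have "(\<lambda>x. p \<otimes> x \<otimes> inv p) \<in> hom G G"
    using assms(1) unfolding hom_def by (auto simp: m_assoc)
  from hom_int_pow[OF this assms(2) is_group is_group] show ?thesis by simp
qed

lemma int_pow_commute:
  assumes "x \<in> carrier G" "y \<in> carrier G" "x \<otimes> y = y \<otimes> x"
  shows "x [^] (i::int) \<otimes> y [^] (j::int) = y [^] j \<otimes> x [^] i"
proof -
  have commute: "a [^] (k::int) \<otimes> b = b \<otimes> a [^] k"
    if "a \<in> carrier G" "b \<in> carrier G" "a \<otimes> b = b \<otimes> a" for a b k
  proof -
    have "b \<otimes> a \<otimes> inv b = a" using that by (simp flip: that(3) add: m_assoc)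
    then have "b \<otimes> a [^] k \<otimes> inv b = a [^] k" using that by (simp add: conj_int_pow)
    then show ?thesis using that inv_solve_right'[of "a [^] k" "b \<otimes> a [^] k" b] by simp
  qed
  have "y [^] j \<otimes> x = x \<otimes> y [^] j" using assms commute[of y x j] by simp
  then show ?thesis using assms commute[of x "y [^] j" i] by simp
qed

end

definition pow_prod :: "('a, 'b) monoid_scheme \<Rightarrow> 'a list \<Rightarrow> int list \<Rightarrow> 'a" where
  "pow_prod G gs ks = gprod G (map2 (\<lambda>g k. g [^]\<^bsub>G\<^esub> k) gs ks)"

lemma pow_prod_map: "pow_prod G gs (map f ss) = gprod G (map2 (\<lambda>g s. g [^]\<^bsub>G\<^esub> f s) gs ss)"
  by (simp add: pow_prod_def zip_map2 case_prod_unfold o_def)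

context group
begin

lemma set_map2_int_pow:
  fixes ks :: "int list"
  assumes "x \<in> set (map2 (\<lambda>g k. g [^] k) gs ks)"
  shows "\<exists>g\<in>set gs. \<exists>k::int. x = g [^] k"
proof -
  obtain g k where "(g, k) \<in> set (zip gs ks)" "x = g [^] k" using assms by auto
  then show ?thesis by (blast dest: set_zip_leftD)
qed

lemma int_pows_closed:
  "set gs \<subseteq> carrier G \<Longrightarrow> set (map2 (\<lambda>g k. g [^] (k::int)) gs ks) \<subseteq> carrier G"
  by (rule set_map2_subset) auto

lemma pow_prod_closed [simp]: "set gs \<subseteq> carrier G \<Longrightarrow> pow_prod G gs ks \<in> carrier G"
  unfolding pow_prod_def by (intro gprod_closed int_pows_closed)

lemma pow_prod_zeros: "pow_prod G gs (map (\<lambda>_. 0) xs) = \<one>"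
proof (induction gs arbitrary: xs)
  case (Cons g gs)
  then show ?case by (cases xs) (simp_all add: pow_prod_def)
qed (simp add: pow_prod_def)

lemma map2_int_pow_add:
  fixes ks ls :: "int list"
  assumes "length ks = length gs" "length ls = length gs" "set gs \<subseteq> carrier G"
  shows "map2 (\<otimes>) (map2 (\<lambda>g k. g [^] k) gs ks) (map2 (\<lambda>g k. g [^] k) gs ls)
       = map2 (\<lambda>g k. g [^] k) gs (map2 (+) ks ls)"
proof -
  have "length ks = length ls" using assms by simp
  then show ?thesis
    using assms(2,3) by (induction ks ls gs rule: list_induct3) (auto simp: int_pow_mult)
qed

end

section \<open>Property FM\<close>

lemma nuH_finite_imp_conj_prod:
  assumes "nuH G H f < \<infinity>"
  obtains xs where "set xs \<subseteq> carrier G \<times> H"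
    and "f = gprod G (map (\<lambda>(g, h). g \<otimes>\<^bsub>G\<^esub> h \<otimes>\<^bsub>G\<^esub> inv\<^bsub>G\<^esub> g) xs)"
  using assms unfolding nuH_def conj_prod_of_def by (auto split: if_splits)

lemma (in group) FM_pair_conj_commute:
  assumes FM: "FM_pair G H" and cs: "set cs \<subseteq> carrier G"
  obtains p where "p \<in> carrier G"
    and "\<And>c k c' k'. c \<in> set cs \<Longrightarrow> k \<in> H \<Longrightarrow> c' \<in> set cs \<Longrightarrow> k' \<in> H \<Longrightarrow>
           (p \<otimes> (c \<otimes> k \<otimes> inv c) \<otimes> inv p) \<otimes> (c' \<otimes> k' \<otimes> inv c')
           = (c' \<otimes> k' \<otimes> inv c') \<otimes> (p \<otimes> (c \<otimes> k \<otimes> inv c) \<otimes> inv p)"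
proof -
  define KS where "KS = (\<Union>c\<in>set cs. conjset G c H)"
  have "\<forall>hs. set hs \<subseteq> carrier G \<longrightarrow> Df G H (\<Union>h\<in>set hs. conjset G h H) \<noteq> {}"
    using FM unfolding FM_pair_def by blast
  from this[rule_format, OF cs] have "Df G H KS \<noteq> {}" unfolding KS_def .
  then obtain h0 where "h0 \<in> Df G H KS" by auto
  then have h0: "h0 \<in> carrier G" and "\<forall>gs. set gs \<subseteq> carrier G \<longrightarrow> (\<exists>h\<in>carrier G.
      \<forall>a\<in>conjset G (h \<otimes> h0 \<otimes> inv h) KS. \<forall>b\<in>(\<Union>c\<in>set gs. conjset G c H). a \<otimes> b = b \<otimes> a)"
    unfolding Df_def by (simp_all only: mem_Collect_eq) (erule conjunct2)
  from this(2)[rule_format, OF cs] obtain h where h: "h \<in> carrier G"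
    and commute: "\<And>a b. a \<in> conjset G (h \<otimes> h0 \<otimes> inv h) KS \<Longrightarrow>
                    b \<in> (\<Union>c\<in>set cs. conjset G c H) \<Longrightarrow> a \<otimes> b = b \<otimes> a"
    by blast
  show thesis
  proof
    show "h \<otimes> h0 \<otimes> inv h \<in> carrier G" using h h0 by simp
    fix c k c' k' assume "c \<in> set cs" "k \<in> H" "c' \<in> set cs" "k' \<in> H"
    then show "(h \<otimes> h0 \<otimes> inv h \<otimes> (c \<otimes> k \<otimes> inv c) \<otimes> inv (h \<otimes> h0 \<otimes> inv h)) \<otimes> (c' \<otimes> k' \<otimes> inv c')
        = (c' \<otimes> k' \<otimes> inv c') \<otimes> (h \<otimes> h0 \<otimes> inv h \<otimes> (c \<otimes> k \<otimes> inv c) \<otimes> inv (h \<otimes> h0 \<otimes> inv h))"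
      by (intro commute) (auto simp: KS_def conjset_def)
  qed
qed

definition centralizing_conjugator :: "('a, 'b) monoid_scheme \<Rightarrow> 'a set \<Rightarrow> 'a \<Rightarrow> bool" where
  "centralizing_conjugator G S p \<longleftrightarrow> p \<in> carrier G \<and>
     (\<forall>x\<in>S. \<forall>y\<in>S. (p \<otimes>\<^bsub>G\<^esub> x \<otimes>\<^bsub>G\<^esub> inv\<^bsub>G\<^esub> p) \<otimes>\<^bsub>G\<^esub> y = y \<otimes>\<^bsub>G\<^esub> (p \<otimes>\<^bsub>G\<^esub> x \<otimes>\<^bsub>G\<^esub> inv\<^bsub>G\<^esub> p))"

lemma (in group) FM_pair_centralizing_conjugator:
  assumes FM: "FM_pair G H" and "finite S" "S \<subseteq> carrier G"
  obtains p where "centralizing_conjugator G S p"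
proof -
  have H: "H \<subseteq> carrier G" using FM subgroup.subset unfolding FM_pair_def by blast
  define cj where "cj = (\<lambda>(c, k). c \<otimes> k \<otimes> inv c)"
  have "\<exists>xs. set xs \<subseteq> carrier G \<times> H \<and> gprod G (map cj xs) = g" if "g \<in> S" for g
  proof -
    have "nuH G H g < \<infinity>" using FM \<open>S \<subseteq> carrier G\<close> that unfolding FM_pair_def by blast
    then obtain xs where "set xs \<subseteq> carrier G \<times> H" "g = gprod G (map cj xs)"
      unfolding cj_def by (rule nuH_finite_imp_conj_prod)
    then show ?thesis by auto
  qed
  then obtain dec where dec_carrier: "\<And>g. g \<in> S \<Longrightarrow> set (dec g) \<subseteq> carrier G \<times> H"
    and dec_prod: "\<And>g. g \<in> S \<Longrightarrow> gprod G (map cj (dec g)) = g"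
    by metis
  have "finite (\<Union>g\<in>S. fst ` set (dec g))" using \<open>finite S\<close> by simp
  then obtain cs where cs: "set cs = (\<Union>g\<in>S. fst ` set (dec g))" by (meson finite_list)
  have cs_carrier: "set cs \<subseteq> carrier G" unfolding cs using dec_carrier by (fastforce simp: subset_iff)
  obtain p where p: "p \<in> carrier G" and commute: "\<And>c k c' k'. c \<in> set cs \<Longrightarrow> k \<in> H \<Longrightarrow>
      c' \<in> set cs \<Longrightarrow> k' \<in> H \<Longrightarrow> (p \<otimes> cj (c, k) \<otimes> inv p) \<otimes> cj (c', k') = cj (c', k') \<otimes> (p \<otimes> cj (c, k) \<otimes> inv p)"
    using FM_pair_conj_commute[OF FM cs_carrier] unfolding cj_def by auto
  have cj_carrier: "set (map cj (dec g)) \<subseteq> carrier G" if "g \<in> S" for g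
    using dec_carrier[OF that] H unfolding cj_def by auto
  have dec_mem: "c \<in> set cs \<and> k \<in> H" if "(c, k) \<in> set (dec g)" "g \<in> S" for c k g
    using that dec_carrier unfolding cs by (metis UN_I fst_conv image_eqI mem_Sigma_iff subsetD)
  \<comment> \<open>\<open>p x p\<inverse>\<close> and \<open>y\<close> are products of factors \<open>p (c k c\<inverse>) p\<inverse>\<close> and \<open>c' k' c'\<inverse>\<close> that commute pairwise.\<close>
  have "(p \<otimes> x \<otimes> inv p) \<otimes> y = y \<otimes> (p \<otimes> x \<otimes> inv p)" if x: "x \<in> S" and y: "y \<in> S" for x y
  proof -
    have conj_carrier: "set (map (\<lambda>z. p \<otimes> z \<otimes> inv p) (map cj (dec x))) \<subseteq> carrier G"
      using cj_carrier[OF x] p by auto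
    have "a \<otimes> b = b \<otimes> a"
      if "a \<in> set (map (\<lambda>z. p \<otimes> z \<otimes> inv p) (map cj (dec x)))" "b \<in> set (map cj (dec y))" for a b
      using that dec_mem[OF _ x] dec_mem[OF _ y] commute by auto
    from gprod_commute[OF conj_carrier cj_carrier[OF y] this] show ?thesis
      unfolding conj_gprod[OF p cj_carrier[OF x], symmetric] dec_prod[OF x] dec_prod[OF y] .
  qed
  then show ?thesis using p that unfolding centralizing_conjugator_def by blast
qed

lemma (in group) centralizing_conjugator_int_pow_commute:
  assumes p: "centralizing_conjugator G S p" and "S \<subseteq> carrier G" "x \<in> S" "y \<in> S"
  shows "(p \<otimes> x [^] (i::int) \<otimes> inv p) \<otimes> y [^] (j::int) = y [^] j \<otimes> (p \<otimes> x [^] i \<otimes> inv p)"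
proof -
  have "p \<in> carrier G" and "(p \<otimes> x \<otimes> inv p) \<otimes> y = y \<otimes> (p \<otimes> x \<otimes> inv p)"
    using p assms(3,4) unfolding centralizing_conjugator_def by blast+
  then show ?thesis using assms(2-4) by (simp add: conj_int_pow int_pow_commute subsetD)
qed

section \<open>Conjugation-invariant norms on products of powers\<close>

locale conj_norm = group G for G (structure) +
  fixes nu :: "'a \<Rightarrow> real"
  assumes conj_inv_pseudo_norm: "conj_inv_pseudo_norm G nu"
begin

lemma nu_one [simp]: "nu \<one> = 0"
  using conj_inv_pseudo_norm by (simp add: conj_inv_pseudo_norm_def)

lemma nu_nonneg: "x \<in> carrier G \<Longrightarrow> 0 \<le> nu x"
  using conj_inv_pseudo_norm by (simp add: conj_inv_pseudo_norm_def)

lemma nu_inv [simp]: "x \<in> carrier G \<Longrightarrow> nu (inv x) = nu x"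
  using conj_inv_pseudo_norm by (simp add: conj_inv_pseudo_norm_def)

lemma nu_mult: "x \<in> carrier G \<Longrightarrow> y \<in> carrier G \<Longrightarrow> nu (x \<otimes> y) \<le> nu x + nu y"
  using conj_inv_pseudo_norm by (simp add: conj_inv_pseudo_norm_def)

lemma nu_conj [simp]: "x \<in> carrier G \<Longrightarrow> g \<in> carrier G \<Longrightarrow> nu (g \<otimes> x \<otimes> inv g) = nu x"
  using conj_inv_pseudo_norm by (simp add: conj_inv_pseudo_norm_def)

lemma nu_nat_pow_le: "x \<in> carrier G \<Longrightarrow> nu (x [^] (n::nat)) \<le> real n * nu x"
proof (induction n)
  case (Suc n)
  have "nu (x [^] Suc n) \<le> nu (x [^] n) + nu x" using Suc.prems by (simp add: nu_mult)
  then show ?case using Suc by (simp add: algebra_simps)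
qed simp

lemma nu_int_pow_le:
  assumes "x \<in> carrier G"
  shows "nu (x [^] (i::int)) \<le> of_int \<bar>i\<bar> * nu x"
proof -
  have "nu (x [^] i) = nu (x [^] nat \<bar>i\<bar>)"
    using assms by (simp only: int_pow_def2[where a = x] split: if_split) simp
  also have "\<dots> \<le> of_int \<bar>i\<bar> * nu x" using nu_nat_pow_le[OF assms, of "nat \<bar>i\<bar>"] by simp
  finally show ?thesis .
qed

lemma nu_pow_prod_le:
  assumes "set gs \<subseteq> carrier G" "\<And>g. g \<in> set gs \<Longrightarrow> nu g \<le> K" "K \<ge> 0"
  shows "nu (pow_prod G gs ks) \<le> K * (\<Sum>k\<leftarrow>ks. of_int \<bar>k\<bar>)"
  using assms(1,2)
proof (induction gs arbitrary: ks)
  case Nil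
  then show ?case
    using \<open>K \<ge> 0\<close> by (simp add: pow_prod_def, intro mult_nonneg_nonneg sum_list_nonneg) auto
next
  case (Cons g gs)
  show ?case
  proof (cases ks)
    case Nil
    then show ?thesis by (simp add: pow_prod_def)
  next
    case (Cons k ks')
    have g: "g \<in> carrier G" and gs: "set gs \<subseteq> carrier G" using Cons.prems(1) by auto
    have "nu (g [^] k) \<le> of_int \<bar>k\<bar> * nu g" by (rule nu_int_pow_le[OF g])
    also have "\<dots> \<le> of_int \<bar>k\<bar> * K" using Cons.prems(2)[of g] by (intro mult_left_mono) auto
    moreover have "nu (pow_prod G gs ks') \<le> K * (\<Sum>k\<leftarrow>ks'. of_int \<bar>k\<bar>)"
      using Cons.IH gs Cons.prems(2) by simp
    moreover have "pow_prod G (g # gs) ks = g [^] k \<otimes> pow_prod G gs ks'"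
      unfolding \<open>ks = k # ks'\<close> by (simp add: pow_prod_def)
    then have "nu (pow_prod G (g # gs) ks) \<le> nu (g [^] k) + nu (pow_prod G gs ks')"
      using g gs by (simp add: nu_mult)
    ultimately have "nu (pow_prod G (g # gs) ks) \<le> of_int \<bar>k\<bar> * K + K * (\<Sum>k\<leftarrow>ks'. of_int \<bar>k\<bar>)"
      by linarith
    then show ?thesis unfolding \<open>ks = k # ks'\<close> by (simp add: distrib_left mult.commute)
  qed
qed

lemma nu_conj_factor_le:
  assumes "A \<in> carrier G" "B \<in> carrier G" "C \<in> carrier G" "p \<in> carrier G"
  shows "nu (A \<otimes> (p \<otimes> B \<otimes> inv p) \<otimes> C) \<le> nu (A \<otimes> B \<otimes> C) + 2 * nu p"
proof -
  define w where "w = inv B \<otimes> p \<otimes> B"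
  have w: "w \<in> carrier G" "nu w = nu p"
    unfolding w_def using assms nu_conj[of p "inv B"] by simp_all
  have "A \<otimes> (p \<otimes> B \<otimes> inv p) \<otimes> C = (A \<otimes> B \<otimes> C) \<otimes> (inv C \<otimes> (w \<otimes> inv p) \<otimes> inv (inv C))"
    unfolding w_def using assms by (simp add: m_assoc)
  also have "nu \<dots> \<le> nu (A \<otimes> B \<otimes> C) + nu (w \<otimes> inv p)"
    using assms w nu_mult[of "A \<otimes> B \<otimes> C" "inv C \<otimes> (w \<otimes> inv p) \<otimes> C"]
      nu_conj[of "w \<otimes> inv p" "inv C"] by simp
  also have "\<dots> \<le> nu (A \<otimes> B \<otimes> C) + 2 * nu p"
    using assms w nu_mult[of w "inv p"] by simp
  finally show ?thesis .
qed

lemma nu_conj_factor: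
  assumes "A \<in> carrier G" "B \<in> carrier G" "C \<in> carrier G" "p \<in> carrier G"
  shows "\<bar>nu (A \<otimes> (p \<otimes> B \<otimes> inv p) \<otimes> C) - nu (A \<otimes> B \<otimes> C)\<bar> \<le> 2 * nu p"
proof -
  have "inv p \<otimes> (p \<otimes> B \<otimes> inv p) \<otimes> inv (inv p) = B" using assms by (simp add: m_assoc)
  then have "nu (A \<otimes> B \<otimes> C) \<le> nu (A \<otimes> (p \<otimes> B \<otimes> inv p) \<otimes> C) + 2 * nu p"
    using nu_conj_factor_le[of A "p \<otimes> B \<otimes> inv p" C "inv p"] assms by simp
  then show ?thesis using nu_conj_factor_le[OF assms] unfolding abs_le_iff by linarith
qed

lemma nu_conj_factors:
  assumes "length xs = length ys" "set xs \<subseteq> carrier G" "set ys \<subseteq> carrier G"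
    and "p \<in> carrier G" "A \<in> carrier G"
  shows "\<bar>nu (A \<otimes> gprod G (map2 (\<lambda>x y. x \<otimes> (p \<otimes> y \<otimes> inv p)) xs ys))
          - nu (A \<otimes> gprod G (map2 (\<otimes>) xs ys))\<bar> \<le> 2 * nu p * real (length xs)"
  using assms(1-3,5)
proof (induction xs ys arbitrary: A rule: list_induct2)
  case (Cons x xs y ys)
  have x: "x \<in> carrier G" and y: "y \<in> carrier G"
    and xs: "set xs \<subseteq> carrier G" and ys: "set ys \<subseteq> carrier G" using Cons.prems by auto
  define R' where "R' = gprod G (map2 (\<lambda>x y. x \<otimes> (p \<otimes> y \<otimes> inv p)) xs ys)"
  define R where "R = gprod G (map2 (\<otimes>) xs ys)"
  have R: "R \<in> carrier G" "R' \<in> carrier G"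
    unfolding R_def R'_def using xs ys \<open>p \<in> carrier G\<close>
    by (intro gprod_closed set_map2_subset conjI; force)+
  let ?A' = "A \<otimes> (x \<otimes> (p \<otimes> y \<otimes> inv p))"
  have "\<bar>nu (?A' \<otimes> R') - nu (?A' \<otimes> R)\<bar> \<le> 2 * nu p * real (length xs)"
    unfolding R_def R'_def using Cons.IH xs ys Cons.prems(3) x y \<open>p \<in> carrier G\<close> by simp
  moreover have "\<bar>nu ((A \<otimes> x) \<otimes> (p \<otimes> y \<otimes> inv p) \<otimes> R) - nu ((A \<otimes> x) \<otimes> y \<otimes> R)\<bar> \<le> 2 * nu p"
    using Cons.prems(3) x y R \<open>p \<in> carrier G\<close> by (intro nu_conj_factor) auto
  moreover have "(A \<otimes> x) \<otimes> (p \<otimes> y \<otimes> inv p) \<otimes> R = ?A' \<otimes> R"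
    and "A \<otimes> gprod G (map2 (\<lambda>x y. x \<otimes> (p \<otimes> y \<otimes> inv p)) (x # xs) (y # ys)) = ?A' \<otimes> R'"
    and "A \<otimes> gprod G (map2 (\<otimes>) (x # xs) (y # ys)) = (A \<otimes> x) \<otimes> y \<otimes> R"
    using Cons.prems(3) x y R \<open>p \<in> carrier G\<close> by (simp_all add: m_assoc R_def R'_def)
  ultimately show ?case by (simp add: algebra_simps)
qed simp

lemma nu_pow_prod_add:
  fixes ks ls :: "int list"
  assumes p: "centralizing_conjugator G (set gs) p" and gs: "set gs \<subseteq> carrier G"
    and len: "length ks = length gs" "length ls = length gs"
  shows "\<bar>nu (pow_prod G gs (map2 (+) ks ls)) - nu (pow_prod G gs ks \<otimes> pow_prod G gs ls)\<bar>
         \<le> 2 * nu p * (real (length gs) + 1)"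
proof -
  have p_carrier: "p \<in> carrier G" using p unfolding centralizing_conjugator_def by blast
  define xs where "xs = map2 (\<lambda>g k. g [^] k) gs ks"
  define ys where "ys = map2 (\<lambda>g k. g [^] k) gs ls"
  have xs: "set xs \<subseteq> carrier G" and ys: "set ys \<subseteq> carrier G"
    unfolding xs_def ys_def using int_pows_closed[OF gs] by blast+
  have "z \<otimes> x = x \<otimes> z"
    if x_in: "x \<in> set xs" and z_in: "z \<in> set (map (\<lambda>y. p \<otimes> y \<otimes> inv p) ys)" for x z
  proof -
    obtain y where y: "y \<in> set ys" and z: "z = p \<otimes> y \<otimes> inv p" using z_in by auto
    obtain g' and l :: int where "g' \<in> set gs" and "y = g' [^] l"
      using set_map2_int_pow y unfolding ys_def by blast
    moreover obtain g and k :: int where "g \<in> set gs" and "x = g [^] k"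
      using set_map2_int_pow x_in unfolding xs_def by blast
    ultimately show ?thesis using centralizing_conjugator_int_pow_commute[OF p gs] z by blast
  qed
  then have "gprod G xs \<otimes> gprod G (map (\<lambda>y. p \<otimes> y \<otimes> inv p) ys)
      = gprod G (map2 (\<otimes>) xs (map (\<lambda>y. p \<otimes> y \<otimes> inv p) ys))"
    using xs ys p_carrier len unfolding xs_def ys_def by (intro gprod_map2_mult) auto
  then have conj_eq: "pow_prod G gs ks \<otimes> (p \<otimes> pow_prod G gs ls \<otimes> inv p)
      = gprod G (map2 (\<lambda>x y. x \<otimes> (p \<otimes> y \<otimes> inv p)) xs ys)"
    using conj_gprod[OF p_carrier ys] unfolding pow_prod_def xs_def[symmetric] ys_def[symmetric]
    by (simp add: zip_map2 case_prod_unfold o_def)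
  have len_xs: "length xs = length ys" "length xs = length gs" unfolding xs_def ys_def using len by simp_all
  have "gprod G (map2 (\<lambda>x y. x \<otimes> (p \<otimes> y \<otimes> inv p)) xs ys) \<in> carrier G"
    and "gprod G (map2 (\<otimes>) xs ys) \<in> carrier G"
    using xs ys p_carrier by (intro gprod_closed set_map2_subset; force)+
  with nu_conj_factors[OF len_xs(1) xs ys p_carrier one_closed]
  have "\<bar>nu (gprod G (map2 (\<lambda>x y. x \<otimes> (p \<otimes> y \<otimes> inv p)) xs ys)) - nu (gprod G (map2 (\<otimes>) xs ys))\<bar>
      \<le> 2 * nu p * real (length gs)"
    unfolding len_xs(2) by (simp only: l_one)
  moreover have "map2 (\<otimes>) xs ys = map2 (\<lambda>g k. g [^] k) gs (map2 (+) ks ls)"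
    unfolding xs_def ys_def using len gs by (rule map2_int_pow_add)
  ultimately have "\<bar>nu (gprod G (map2 (\<lambda>x y. x \<otimes> (p \<otimes> y \<otimes> inv p)) xs ys))
              - nu (pow_prod G gs (map2 (+) ks ls))\<bar> \<le> 2 * nu p * real (length gs)"
    unfolding pow_prod_def by simp
  moreover have "\<bar>nu (pow_prod G gs ks \<otimes> (p \<otimes> pow_prod G gs ls \<otimes> inv p))
              - nu (pow_prod G gs ks \<otimes> pow_prod G gs ls)\<bar> \<le> 2 * nu p"
    using nu_conj_factor[of "pow_prod G gs ks" "pow_prod G gs ls" \<one> p] gs p_carrier by simp
  ultimately show ?thesis unfolding conj_eq abs_le_iff by (simp add: algebra_simps)
qed

lemma nu_pow_prod_add_le:
  fixes ks ls :: "int list"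
  assumes "centralizing_conjugator G (set gs) p" "set gs \<subseteq> carrier G"
    and "length ks = length gs" "length ls = length gs"
  shows "nu (pow_prod G gs (map2 (+) ks ls))
         \<le> nu (pow_prod G gs ks) + nu (pow_prod G gs ls) + 2 * nu p * (real (length gs) + 1)"
  using nu_pow_prod_add[OF assms] nu_mult[of "pow_prod G gs ks" "pow_prod G gs ls"] assms(2)
  unfolding abs_le_iff by simp

lemma nu_pow_prod_uminus_le:
  fixes ks :: "int list"
  assumes p: "centralizing_conjugator G (set gs) p" and gs: "set gs \<subseteq> carrier G"
    and len: "length ks = length gs"
  shows "nu (pow_prod G gs (map uminus ks)) \<le> nu (pow_prod G gs ks) + 2 * nu p * (real (length gs) + 1)"
proof -
  let ?P = "pow_prod G gs ks" and ?Q = "pow_prod G gs (map uminus ks)"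
  have "map2 (+) ks (map uminus ks) = map (\<lambda>_. 0) ks" by (induction ks) auto
  then have "nu (?P \<otimes> ?Q) \<le> 2 * nu p * (real (length gs) + 1)"
    using nu_pow_prod_add[OF p gs len, of "map uminus ks"] len by (simp add: pow_prod_zeros)
  moreover have "nu ?Q = nu (inv ?P \<otimes> (?P \<otimes> ?Q))" using gs by simp
  moreover have "nu (inv ?P \<otimes> (?P \<otimes> ?Q)) \<le> nu ?P + nu (?P \<otimes> ?Q)"
    using gs nu_mult[of "inv ?P" "?P \<otimes> ?Q"] by simp
  ultimately show ?thesis by linarith
qed

end

theorem lemma3p4:
  fixes G :: "('a, 'b) monoid_scheme" and \<nu> :: "'a \<Rightarrow> real"
    and gs :: "'a list" and ss :: "real list" and lam :: real
  assumes "group G" and "FM G" and "conj_inv_pseudo_norm G \<nu>"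
    and "set gs \<subseteq> carrier G" and "length ss = length gs"
  shows "\<exists>L. ((\<lambda>n::nat. \<nu> (gprod G (map2 (\<lambda>g s. g [^]\<^bsub>G\<^esub> \<lfloor>s * real n\<rfloor>) gs ss)) / real n)
              \<longlonglongrightarrow> L)
          \<and> ((\<lambda>n::nat. \<nu> (gprod G (map2 (\<lambda>g s. g [^]\<^bsub>G\<^esub> \<lfloor>lam * s * real n\<rfloor>) gs ss)) / real n)
              \<longlonglongrightarrow> \<bar>lam\<bar> * L)"
proof -
  interpret conj_norm G \<nu> using assms(1,3) by (simp add: conj_norm_def conj_norm_axioms_def)
  obtain H where "FM_pair G H" using \<open>FM G\<close> unfolding FM_def by blast
  then obtain p where p: "centralizing_conjugator G (set gs) p"
    using FM_pair_centralizing_conjugator assms(4) by blast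
  have "0 \<le> \<nu> p" using p nu_nonneg unfolding centralizing_conjugator_def by blast
  have "0 \<le> (\<Sum>g\<leftarrow>gs. \<nu> g)" using assms(4) nu_nonneg by (intro sum_list_nonneg) auto
  have "\<exists>L. \<forall>t. (\<lambda>n. \<nu> (pow_prod G gs (map (\<lambda>s. \<lfloor>t * s * real n\<rfloor>) ss)) / real n) \<longlonglongrightarrow> \<bar>t\<bar> * L"
  proof (rule quasi_norm_growth_abs_homogeneous
      [where C = "2 * \<nu> p * (real (length gs) + 1)" and K = "\<Sum>g\<leftarrow>gs. \<nu> g"])
    have "\<nu> g \<le> (\<Sum>g\<leftarrow>gs. \<nu> g)" if "g \<in> set gs" for g
      using that assms(4) nu_nonneg by (intro member_le_sum_list) auto
    then show "\<nu> (pow_prod G gs ks) \<le> (\<Sum>g\<leftarrow>gs. \<nu> g) * (\<Sum>k\<leftarrow>ks. of_int \<bar>k\<bar>)" for ks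
      using assms(4) nu_nonneg by (intro nu_pow_prod_le sum_list_nonneg) auto
  qed (use nu_pow_prod_add_le[OF p assms(4)] nu_pow_prod_uminus_le[OF p assms(4)] assms(4,5)
        nu_nonneg \<open>0 \<le> \<nu> p\<close> \<open>0 \<le> (\<Sum>g\<leftarrow>gs. \<nu> g)\<close> in auto)
  then obtain L where "\<And>t. (\<lambda>n. \<nu> (pow_prod G gs (map (\<lambda>s. \<lfloor>t * s * real n\<rfloor>) ss)) / real n)
                              \<longlonglongrightarrow> \<bar>t\<bar> * L" by blast
  from this[of 1] this[of lam] show ?thesis by (auto simp: pow_prod_map)
qed

end
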